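(* The triple $(\mathbb{G}, \varepsilon, (\cdot)^* )$ is a comonad in Kleisli form on the category of $\sigma$-structures, i.e. the following equations hold (for all $\sigma$-structures $\mathcal{A}$ and homomorphisms $f : \mathbb{G}\mathcal{A} \to \mathcal{B}$, $g : \mathbb{G}\mathcal{B} \to \mathcal{C}$): \[ \varepsilon_{\mathcal{A}}^* = \mathsf{id}_{\mathbb{G} \mathcal{A}}, \qquad \varepsilon \circ f^* = f, \qquad (g \circ f^* )^* = g^* \circ f^* . \]
   Context: Fix a relational vocabulary $\sigma$ and a notion of guarding $\mathfrak{g}$ (atom, loose, or clique guards). A subset $X$ of a $\sigma$-structure $\mathcal{A}$ is $\mathfrak{g}$-guarded if it is contained in the support of a tuple $\vec{a}$ with $\mathcal{A} \models G(\vec{a})$ for some $\mathfrak{g}$-guard $G$. A play is a non-empty list $p = [U_1,\ldots,U_n]$ of $\mathfrak{g}$-guarded sets of $\mathcal{A}$, with last element $\lambda(p) = U_n$; plays are ordered by the prefix order $\sqsubseteq$. A focussed play is a pair $\langle p, a\rangle$ with $a \in \lambda(p)$. Define $\langle p, a\rangle \sim \langle q, a'\rangle$ iff $a = a'$, the greatest common prefix $p \sqcap q$ is non-empty, and $a$ belongs to $\lambda(u)$ for every $u \in [p\sqcap q, p] \cup [p \sqcap q, q]$. Write $[p,a]$ for the $\sim$-equivalence class of $\langle p, a\rangle$. The structure $\mathbb{G}\mathcal{A}$ (written $\mathbb{G}^{\mathfrak{g}}\mathcal{A}$ when the guard type matters) has universe the set of these classes, and $R^{\mathbb{G}\mathcal{A}}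 = \{([p,a_1],\ldots,[p,a_r]) \mid R^{\mathcal{A}}(a_1,\ldots,a_r)\}$. The counit $\varepsilon_{\mathcal{A}} : \mathbb{G}\mathcal{A} \to \mathcal{A}$ is $\varepsilon_{\mathcal{A}}([p,a]) = a$. For a homomorphism $h : \mathbb{G}\mathcal{A} \to \mathcal{B}$, its coextension $h^* : \mathbb{G}\mathcal{A} \to \mathbb{G}\mathcal{B}$ is $h^*([[U_1,\ldots,U_n],a]) = [[V_1,\ldots,V_n], h([[U_1,\ldots,U_n],a])]$, where $V_j = \{ h([[U_1,\ldots,U_j], b]) \mid b \in U_j\}$ for $1 \le j \le n$. *)

theory Defs
  imports Main "HOL-Library.Sublist"
begin

text \<open>A vocabulary sigma is given by a type of relation symbols 'r together with an
  arity function ar. A structure has a universe and an interpretation of each symbol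
  as a set of tuples (lists).\<close>

record ('a, 'r) struct =
  univ :: "'a set"
  rel  :: "'r \<Rightarrow> 'a list set"

definition sigma_struct :: "('r \<Rightarrow> nat) \<Rightarrow> ('a, 'r) struct \<Rightarrow> bool" where
  "sigma_struct ar A \<longleftrightarrow>
     (\<forall>R. \<forall>t\<in>rel A R. length t = ar R \<and> set t \<subseteq> univ A)"

definition hom :: "('a, 'r) struct \<Rightarrow> ('b, 'r) struct \<Rightarrow> ('a \<Rightarrow> 'b) \<Rightarrow> bool" where
  "hom A B h \<longleftrightarrow>
     (\<forall>x\<in>univ A. h x \<in> univ B) \<and> (\<forall>R. \<forall>t\<in>rel A R. map h t \<in> rel B R)"

datatype 'r gatom = RelA 'r "nat list" | EqA nat nat

fun avars :: "'r gatom \<Rightarrow> nat set" where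
  "avars (RelA R xs) = set xs"
| "avars (EqA i j) = {i, j}"

fun aholds :: "('a, 'r) struct \<Rightarrow> (nat \<Rightarrow> 'a) \<Rightarrow> 'r gatom \<Rightarrow> bool" where
  "aholds A v (RelA R xs) \<longleftrightarrow> map v xs \<in> rel A R"
| "aholds A v (EqA i j) \<longleftrightarrow> v i = v j"

text \<open>A guard formula: exists (variables not among 0..<gfree) . conjunction of atoms.
  The free variables are 0, ..., gfree - 1 (the tuple x-bar of G(x-bar)).\<close>

record 'r guard =
  gatoms :: "'r gatom list"
  gfree  :: nat

definition gvars :: "'r guard \<Rightarrow> nat set" where
  "gvars G = (\<Union>\<alpha>\<in>set (gatoms G). avars \<alpha>)"

definition well_typed_guard :: "('r \<Rightarrow> nat) \<Rightarrow> 'r guard \<Rightarrow> bool" where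
  "well_typed_guard ar G \<longleftrightarrow>
     gatoms G \<noteq> [] \<and>
     (\<forall>R xs. RelA R xs \<in> set (gatoms G) \<longrightarrow> length xs = ar R) \<and>
     {0..<gfree G} \<subseteq> gvars G"

definition cooccur :: "'r guard \<Rightarrow> bool" where
  "cooccur G \<longleftrightarrow>
     (\<forall>i<gfree G. \<forall>j<gfree G. \<exists>\<alpha>\<in>set (gatoms G). {i, j} \<subseteq> avars \<alpha>)"

datatype guard_kind = AtomG | LooseG | CliqueG

fun is_guard :: "('r \<Rightarrow> nat) \<Rightarrow> guard_kind \<Rightarrow> 'r guard \<Rightarrow> bool" where
  "is_guard ar AtomG G \<longleftrightarrow>
     well_typed_guard ar G \<and> length (gatoms G) = 1 \<and> gvars G = {0..<gfree G}"
| "is_guard ar LooseG G \<longleftrightarrow>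
     well_typed_guard ar G \<and> gvars G = {0..<gfree G} \<and> cooccur G"
| "is_guard ar CliqueG G \<longleftrightarrow>
     well_typed_guard ar G \<and> cooccur G"

definition sat_guard :: "('a, 'r) struct \<Rightarrow> 'r guard \<Rightarrow> 'a list \<Rightarrow> bool" where
  "sat_guard A G as \<longleftrightarrow>
     length as = gfree G \<and>
     (\<exists>v. (\<forall>i<gfree G. v i = as ! i) \<and> (\<forall>i\<in>gvars G. v i \<in> univ A) \<and>
          (\<forall>\<alpha>\<in>set (gatoms G). aholds A v \<alpha>))"

definition guarded :: "('r \<Rightarrow> nat) \<Rightarrow> guard_kind \<Rightarrow> ('a, 'r) struct \<Rightarrow> 'a set \<Rightarrow> bool" where
  "guarded ar k A X \<longleftrightarrow>
     (\<exists>G as. is_guard ar k G \<and> sat_guard A G as \<and> X \<subseteq> set as)"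

definition plays :: "('r \<Rightarrow> nat) \<Rightarrow> guard_kind \<Rightarrow> ('a, 'r) struct \<Rightarrow> 'a set list set" where
  "plays ar k A = {p. p \<noteq> [] \<and> (\<forall>U\<in>set p. guarded ar k A U)}"

definition fplays :: "('r \<Rightarrow> nat) \<Rightarrow> guard_kind \<Rightarrow> ('a, 'r) struct \<Rightarrow> ('a set list \<times> 'a) set" where
  "fplays ar k A = {(p, a). p \<in> plays ar k A \<and> a \<in> last p}"

definition sim :: "('r \<Rightarrow> nat) \<Rightarrow> guard_kind \<Rightarrow> ('a, 'r) struct
                   \<Rightarrow> (('a set list \<times> 'a) \<times> ('a set list \<times> 'a)) set" where
  "sim ar k A = {((p, a), (q, b)).
      (p, a) \<in> fplays ar k A \<and> (q, b) \<in> fplays ar k A \<and> a = b \<and>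
      longest_common_prefix p q \<noteq> [] \<and>
      (\<forall>u. prefix (longest_common_prefix p q) u \<and> (prefix u p \<or> prefix u q)
            \<longrightarrow> a \<in> last u)}"

definition cls :: "('r \<Rightarrow> nat) \<Rightarrow> guard_kind \<Rightarrow> ('a, 'r) struct
                   \<Rightarrow> 'a set list \<times> 'a \<Rightarrow> ('a set list \<times> 'a) set" where
  "cls ar k A pa = sim ar k A `` {pa}"

definition Gstruct :: "('r \<Rightarrow> nat) \<Rightarrow> guard_kind \<Rightarrow> ('a, 'r) struct
                       \<Rightarrow> (('a set list \<times> 'a) set, 'r) struct" where
  "Gstruct ar k A =
     \<lparr> univ = fplays ar k A // sim ar k A,
       rel = (\<lambda>R. {map (\<lambda>a. cls ar k A (p, a)) as | p as.
                      p \<in> plays ar k A \<and> as \<in> rel A R \<and> set as \<subseteq> last p}) \<rparr>"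

definition counit :: "('a set list \<times> 'a) set \<Rightarrow> 'a" where
  "counit x = snd (SOME y. y \<in> x)"

definition coext :: "('r \<Rightarrow> nat) \<Rightarrow> guard_kind \<Rightarrow> ('a, 'r) struct \<Rightarrow> ('b, 'r) struct
                     \<Rightarrow> (('a set list \<times> 'a) set \<Rightarrow> 'b)
                     \<Rightarrow> ('a set list \<times> 'a) set \<Rightarrow> ('b set list \<times> 'b) set" where
  "coext ar k A B h x =
     (let (p, a) = (SOME y. y \<in> x)
      in cls ar k B
           (map (\<lambda>j. (\<lambda>b. h (cls ar k A (take (Suc j) p, b))) ` (p ! j)) [0..<length p],
            h (cls ar k A (p, a))))"

end

(*
  An element [p, a] of G A is determined by a together with any non-empty common prefix m of
  representatives from which a persists, i.e. lies in the last set of every play between m and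
  the representative; in this form the relation is visibly an equivalence.

  The coextension h* acts on plays by replacing each U_j with its image under
  h([U_1, ..., U_j], -). This commutes with taking prefixes, so it carries a prefix witnessing
  <p, a> ~ <q, a> to one witnessing the images, and h* is well defined on classes. The one real
  point is that the image sets are again guarded: a guard G(as) covering U_j is transported along
  h by witnessing each atom of G in its own extended play, which is a play because single atoms
  are guards, and by giving each atom private copies of the quantified variables. With h*
  computed on representatives, the three comonad laws become componentwise identities of plays.
*)
theory Submission
  imports Defs "HOL-Library.Nat_Bijection"
begin

section \<open>The equivalence of focussed plays\<close>

definition persists :: "'a \<Rightarrow> 'a set list \<Rightarrow> 'a set list \<Rightarrow> bool" where
  "persists a m p \<longleftrightarrow> (\<forall>u. prefix m u \<longrightarrow> prefix u p \<longrightarrow> a \<in> last u)"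

lemma persists_mono: "persists a m p \<Longrightarrow> prefix m m' \<Longrightarrow> persists a m' p"
  unfolding persists_def by (meson prefix_order.trans)

lemma persists_join:
  assumes "persists a m q" and "persists a m' r"
    and "prefix m m'" and "prefix m' q" and "prefix m' r"
  shows "persists a m r"
  unfolding persists_def
proof (intro allI impI)
  fix u assume u: "prefix m u" "prefix u r"
  show "a \<in> last u"
  proof (cases "prefix m' u")
    case True
    then show ?thesis using assms(2) u(2) unfolding persists_def by blast
  next
    case False
    then have "prefix u q"
      using u(2) assms(4,5) prefix_same_cases prefix_order.trans by metis
    then show ?thesis using assms(1) u(1) unfolding persists_def by blast
  qed
qed

lemma sim_iff:
  "((p, a), (q, b)) \<in> sim ar k A \<longleftrightarrow>
     (p, a) \<in> fplays ar k A \<and> (q, b) \<in> fplays ar k A \<and> a = b \<and>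
     (\<exists>m. m \<noteq> [] \<and> prefix m p \<and> prefix m q \<and> persists a m p \<and> persists a m q)"
proof -
  let ?lcp = "longest_common_prefix p q"
  have lcp: "prefix ?lcp p" "prefix ?lcp q"
    by (rule longest_common_prefix_prefix1, rule longest_common_prefix_prefix2)
  have "(\<exists>m. m \<noteq> [] \<and> prefix m p \<and> prefix m q \<and> persists a m p \<and> persists a m q)
    \<longleftrightarrow> ?lcp \<noteq> [] \<and> persists a ?lcp p \<and> persists a ?lcp q"
  proof
    assume "\<exists>m. m \<noteq> [] \<and> prefix m p \<and> prefix m q \<and> persists a m p \<and> persists a m q"
    then obtain m where "m \<noteq> []" "prefix m p" "prefix m q" "persists a m p" "persists a m q"
      by blast
    moreover have "prefix m ?lcp"
      using \<open>prefix m p\<close> \<open>prefix m q\<close> by (rule longest_common_prefix_max_prefix)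
    ultimately show "?lcp \<noteq> [] \<and> persists a ?lcp p \<and> persists a ?lcp q"
      using persists_mono by fastforce
  qed (use lcp in blast)
  moreover have "persists a ?lcp p \<and> persists a ?lcp q \<longleftrightarrow>
    (\<forall>u. prefix ?lcp u \<and> (prefix u p \<or> prefix u q) \<longrightarrow> a \<in> last u)"
    unfolding persists_def by blast
  ultimately show ?thesis
    unfolding sim_def by auto
qed

lemma sim_refl: "(p, a) \<in> fplays ar k A \<Longrightarrow> ((p, a), (p, a)) \<in> sim ar k A"
  unfolding sim_iff persists_def fplays_def plays_def
  by (blast dest: prefix_order.antisym)

lemma sim_sym: "((p, a), (q, b)) \<in> sim ar k A \<Longrightarrow> ((q, b), (p, a)) \<in> sim ar k A"
  unfolding sim_iff by blast

lemma sim_trans: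
  assumes "((p, a), (q, b)) \<in> sim ar k A" and "((q, b), (r, c)) \<in> sim ar k A"
  shows "((p, a), (r, c)) \<in> sim ar k A"
proof -
  obtain m1 m2 where fp: "(p, a) \<in> fplays ar k A" "(r, c) \<in> fplays ar k A"
    and eq: "a = b" "b = c" and "m1 \<noteq> []" "m2 \<noteq> []"
    and m1: "prefix m1 p" "prefix m1 q" "persists a m1 p" "persists a m1 q"
    and m2: "prefix m2 q" "prefix m2 r" "persists a m2 q" "persists a m2 r"
    using assms unfolding sim_iff by metis
  consider "prefix m1 m2" | "prefix m2 m1" using m1(2) m2(1) prefix_same_cases by blast
  then show ?thesis
  proof cases
    case 1
    then have "prefix m1 r" "persists a m1 r"
      using m1 m2 persists_join[of a m1 q m2 r] prefix_order.trans by blast+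
    then show ?thesis using fp eq \<open>m1 \<noteq> []\<close> m1 unfolding sim_iff by blast
  next
    case 2
    then have "prefix m2 p" "persists a m2 p"
      using m1 m2 persists_join[of a m2 q m1 p] prefix_order.trans by blast+
    then show ?thesis using fp eq \<open>m2 \<noteq> []\<close> m2 unfolding sim_iff by blast
  qed
qed

lemma equiv_sim: "equiv (fplays ar k A) (sim ar k A)"
proof (rule equivI)
  show "sim ar k A \<subseteq> fplays ar k A \<times> fplays ar k A"
    unfolding sim_def by blast
  show "refl_on (fplays ar k A) (sim ar k A)"
    using sim_refl by (fastforce intro: refl_onI)
  show "sym (sim ar k A)" unfolding sym_def using sim_sym by fast
  show "trans (sim ar k A)" unfolding trans_def using sim_trans by fast
qed

lemma sim_snoc:
  assumes "p \<in> plays ar k A" and "guarded ar k A W" and "c \<in> last p" and "c \<in> W"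
  shows "((p @ [W], c), (p, c)) \<in> sim ar k A"
proof -
  have "persists c p (p @ [W])" "persists c p p"
    using assms(3,4) unfolding persists_def by (auto dest: prefix_order.antisym)
  then show ?thesis
    using assms unfolding sim_iff fplays_def plays_def by auto
qed

lemma sim_prefix:
  assumes "(q, c) \<in> fplays ar k A" and "m \<noteq> []" and "persists c m q"
    and "prefix m u" and "prefix u q"
  shows "((u, c), (q, c)) \<in> sim ar k A"
proof -
  have "c \<in> last u" using assms(3-5) unfolding persists_def by blast
  moreover have "u \<in> plays ar k A"
    using assms(1,2,4) set_mono_prefix[OF assms(5)] unfolding fplays_def plays_def by auto
  moreover have "persists c u u" "persists c u q"
    using \<open>c \<in> last u\<close> persists_mono[OF assms(3,4)]
    unfolding persists_def by (auto dest: prefix_order.antisym)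
  moreover have "u \<noteq> []" using assms(2,4) by auto
  ultimately show ?thesis
    using assms unfolding sim_iff fplays_def by (auto intro!: exI[of _ u])
qed

lemma cls_eq: "(x, y) \<in> sim ar k A \<Longrightarrow> cls ar k A x = cls ar k A y"
  unfolding cls_def by (rule equiv_class_eq[OF equiv_sim])

lemma cls_in_univ: "x \<in> fplays ar k A \<Longrightarrow> cls ar k A x \<in> univ (Gstruct ar k A)"
  unfolding cls_def Gstruct_def by (simp add: quotientI)

lemma univ_GstructE:
  assumes "x \<in> univ (Gstruct ar k A)"
  obtains p a where "(p, a) \<in> fplays ar k A" and "x = cls ar k A (p, a)"
  using assms unfolding cls_def Gstruct_def by (auto elim!: quotientE)

lemma some_in_cls:
  assumes "(p, a) \<in> fplays ar k A"
  shows "((SOME y. y \<in> cls ar k A (p, a)), (p, a)) \<in> sim ar k A"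
proof -
  have "(p, a) \<in> cls ar k A (p, a)"
    unfolding cls_def using sim_refl[OF assms] by simp
  then have "(SOME y. y \<in> cls ar k A (p, a)) \<in> cls ar k A (p, a)" by (rule someI)
  then show ?thesis unfolding cls_def by (metis Image_singleton_iff sim_sym surj_pair)
qed

lemma counit_cls: "(p, a) \<in> fplays ar k A \<Longrightarrow> counit (cls ar k A (p, a)) = a"
  unfolding counit_def using some_in_cls by (metis prod.collapse sim_iff)

section \<open>Images of guarded sets\<close>

lemma is_guard_well_typed: "is_guard ar k G \<Longrightarrow> well_typed_guard ar G"
  by (cases k) auto

lemma guarded_subset_univ: "guarded ar k A X \<Longrightarrow> X \<subseteq> univ A"
proof
  fix x assume "guarded ar k A X" and "x \<in> X"
  then obtain G as where G: "is_guard ar k G" "sat_guard A G as" "X \<subseteq> set as"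
    unfolding guarded_def by blast
  then obtain v where v: "length as = gfree G" "\<forall>i<gfree G. v i = as ! i"
    "\<forall>i\<in>gvars G. v i \<in> univ A"
    unfolding sat_guard_def by blast
  obtain i where i: "i < length as" "x = as ! i"
    using G(3) \<open>x \<in> X\<close> by (metis in_set_conv_nth subsetD)
  have "i \<in> gvars G"
    using is_guard_well_typed[OF G(1)] i(1) v(1) unfolding well_typed_guard_def by auto
  then show "x \<in> univ A" using v i by auto
qed

lemma guarded_singleton:
  assumes "a \<in> univ A"
  shows "guarded ar k A {a}"
proof -
  let ?G = "\<lparr>gatoms = [EqA 0 0], gfree = 1\<rparr> :: 'r guard"
  have "is_guard ar k ?G"
    by (cases k) (auto simp: well_typed_guard_def gvars_def cooccur_def)
  moreover have "sat_guard A ?G [a]"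
    using assms unfolding sat_guard_def gvars_def by (auto intro!: exI[of _ "\<lambda>_. a"])
  ultimately show ?thesis unfolding guarded_def by fastforce
qed

lemma guarded_tuple:
  assumes "t \<in> rel A R" and "length t = ar R" and "set t \<subseteq> univ A"
  shows "guarded ar k A (set t)"
proof -
  let ?G = "\<lparr>gatoms = [RelA R [0..<length t]], gfree = length t\<rparr>"
  have "is_guard ar k ?G"
    using assms(2) by (cases k) (auto simp: well_typed_guard_def gvars_def cooccur_def)
  moreover have "sat_guard A ?G t"
    using assms(1,3) unfolding sat_guard_def gvars_def
    by (auto simp: map_nth intro!: exI[of _ "(!) t"])
  ultimately show ?thesis unfolding guarded_def by blast
qed

lemma guarded_atom_image:
  assumes "well_typed_guard ar G" and "\<alpha> \<in> set (gatoms G)"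
    and "\<forall>i\<in>avars \<alpha>. v i \<in> univ A" and "aholds A v \<alpha>"
  shows "guarded ar k A (v ` avars \<alpha>)"
proof (cases \<alpha>)
  case (RelA R xs)
  then have "length (map v xs) = ar R"
    using assms(1,2) unfolding well_typed_guard_def by auto
  then show ?thesis
    using assms(3,4) RelA guarded_tuple[of "map v xs" A R ar k] by auto
next
  case (EqA i j)
  then show ?thesis using assms(3,4) guarded_singleton[of "v i" A ar k] by auto
qed

fun rename_gatom :: "(nat \<Rightarrow> nat) \<Rightarrow> 'r gatom \<Rightarrow> 'r gatom" where
  "rename_gatom f (RelA R xs) = RelA R (map f xs)"
| "rename_gatom f (EqA i j) = EqA (f i) (f j)"

lemma avars_rename_gatom [simp]: "avars (rename_gatom f \<alpha>) = f ` avars \<alpha>"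
  by (cases \<alpha>) auto

lemma aholds_rename_gatom: "aholds A v (rename_gatom f \<alpha>) = aholds A (v \<circ> f) \<alpha>"
  by (cases \<alpha>) auto

lemma aholds_cong: "(\<And>i. i \<in> avars \<alpha> \<Longrightarrow> v i = v' i) \<Longrightarrow> aholds A v \<alpha> = aholds A v' \<alpha>"
  by (cases \<alpha>) (auto cong: map_cong)

lemma rename_gatom_ident: "(\<And>i. i \<in> avars \<alpha> \<Longrightarrow> f i = i) \<Longrightarrow> rename_gatom f \<alpha> = \<alpha>"
  by (cases \<alpha>) (auto intro: map_idI)

text \<open>Each atom receives private copies of the quantified variables, while the free variables
  \<open>0..<gfree G\<close> stay shared; thus distinct atoms may be witnessed by distinct valuations.\<close>

definition sep_var :: "nat \<Rightarrow> nat \<Rightarrow> nat \<Rightarrow> nat" where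
  "sep_var n t y = (if y < n then y else n + prod_encode (t, y))"

definition separate_guard :: "'r guard \<Rightarrow> 'r guard" where
  "separate_guard G =
     \<lparr>gatoms = map (\<lambda>t. rename_gatom (sep_var (gfree G) t) (gatoms G ! t)) [0..<length (gatoms G)],
      gfree = gfree G\<rparr>"

lemma set_gatoms_separate_guard:
  "set (gatoms (separate_guard G)) =
     (\<lambda>t. rename_gatom (sep_var (gfree G) t) (gatoms G ! t)) ` {..<length (gatoms G)}"
  by (auto simp: separate_guard_def)

lemma avars_separate_guard:
  assumes "i < gfree G" and "i \<in> avars \<alpha>"
  shows "i \<in> avars (rename_gatom (sep_var (gfree G) t) \<alpha>)"
  using assms by (auto simp: sep_var_def intro!: image_eqI[of i _ i])

lemma separate_guard_ident:
  fixes G :: "'r guard"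
  assumes "gvars G \<subseteq> {0..<gfree G}"
  shows "separate_guard G = G"
proof -
  have "rename_gatom (sep_var (gfree G) t) (gatoms G ! t) = gatoms G ! t"
    if t: "t < length (gatoms G)" for t
  proof (rule rename_gatom_ident)
    fix i assume "i \<in> avars (gatoms G ! t)"
    then have "i < gfree G" using assms t nth_mem unfolding gvars_def by fastforce
    then show "sep_var (gfree G) t i = i" by (simp add: sep_var_def)
  qed
  then have "gatoms (separate_guard G) = gatoms G"
    unfolding separate_guard_def by (auto intro: nth_equalityI)
  then show ?thesis
    by (simp add: separate_guard_def)
qed

lemma well_typed_separate_guard:
  assumes "well_typed_guard ar G"
  shows "well_typed_guard ar (separate_guard G)"
  unfolding well_typed_guard_def
proof (intro conjI allI impI subsetI)
  show "gatoms (separate_guard G) \<noteq> []"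
    using assms unfolding well_typed_guard_def separate_guard_def by simp
next
  fix R xs assume "RelA R xs \<in> set (gatoms (separate_guard G))"
  then obtain t where t: "t < length (gatoms G)"
    and "rename_gatom (sep_var (gfree G) t) (gatoms G ! t) = RelA R xs"
    unfolding set_gatoms_separate_guard by (auto simp del: rename_gatom.simps)
  then obtain ys where "gatoms G ! t = RelA R ys" and "xs = map (sep_var (gfree G) t) ys"
    by (cases "gatoms G ! t") auto
  then show "length xs = ar R"
    using assms nth_mem[OF t] unfolding well_typed_guard_def by auto
next
  fix i assume "i \<in> {0..<gfree (separate_guard G)}"
  then have "i < gfree G" "i \<in> gvars G"
    using assms unfolding well_typed_guard_def by (auto simp: separate_guard_def)
  then obtain t where "t < length (gatoms G)" "i \<in> avars (gatoms G ! t)"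
    unfolding gvars_def by (auto simp: in_set_conv_nth)
  then show "i \<in> gvars (separate_guard G)"
    using avars_separate_guard[OF \<open>i < gfree G\<close>]
    unfolding gvars_def set_gatoms_separate_guard by blast
qed

lemma cooccur_separate_guard:
  assumes "cooccur G"
  shows "cooccur (separate_guard G)"
  unfolding cooccur_def
proof (intro allI impI)
  fix i j assume "i < gfree (separate_guard G)" "j < gfree (separate_guard G)"
  then have ij: "i < gfree G" "j < gfree G" by (auto simp: separate_guard_def)
  then obtain t where "t < length (gatoms G)" "{i, j} \<subseteq> avars (gatoms G ! t)"
    using assms unfolding cooccur_def by (metis in_set_conv_nth)
  then show "\<exists>\<alpha>\<in>set (gatoms (separate_guard G)). {i, j} \<subseteq> avars \<alpha>"
    using avars_separate_guard[OF ij(1)] avars_separate_guard[OF ij(2)]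
    unfolding set_gatoms_separate_guard by (auto simp del: avars_rename_gatom intro!: bexI[of _ t])
qed

lemma is_guard_separate_guard: "is_guard ar k G \<Longrightarrow> is_guard ar k (separate_guard G)"
  by (cases k) (auto simp: separate_guard_ident well_typed_separate_guard cooccur_separate_guard)

lemma sat_separate_guard:
  assumes "length bs = gfree G"
    and holds: "\<And>t. t < length (gatoms G) \<Longrightarrow> aholds B (vs t) (gatoms G ! t)"
    and in_univ: "\<And>t i. t < length (gatoms G) \<Longrightarrow> i \<in> avars (gatoms G ! t) \<Longrightarrow> vs t i \<in> univ B"
    and agree: "\<And>t i. t < length (gatoms G) \<Longrightarrow> i \<in> avars (gatoms G ! t) \<Longrightarrow> i < gfree G
                  \<Longrightarrow> vs t i = bs ! i"
  shows "sat_guard B (separate_guard G) bs"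
proof -
  let ?n = "gfree G"
  define w where "w z = (if z < ?n then bs ! z else case_prod vs (prod_decode (z - ?n)))" for z
  have w: "w (sep_var ?n t i) = vs t i" if "t < length (gatoms G)" "i \<in> avars (gatoms G ! t)" for t i
    using agree[OF that] by (simp add: w_def sep_var_def)
  have "aholds B w \<alpha>" if \<alpha>: "\<alpha> \<in> set (gatoms (separate_guard G))" for \<alpha>
  proof -
    obtain t where t: "t < length (gatoms G)" "\<alpha> = rename_gatom (sep_var ?n t) (gatoms G ! t)"
      using \<alpha> unfolding set_gatoms_separate_guard by blast
    have "aholds B (w \<circ> sep_var ?n t) (gatoms G ! t) = aholds B (vs t) (gatoms G ! t)"
      using w[OF t(1)] by (intro aholds_cong) simp
    then show ?thesis using holds[OF t(1)] t(2) by (simp add: aholds_rename_gatom)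
  qed
  moreover have "w z \<in> univ B" if z: "z \<in> gvars (separate_guard G)" for z
  proof -
    obtain t i where "t < length (gatoms G)" "i \<in> avars (gatoms G ! t)" "z = sep_var ?n t i"
      using z unfolding gvars_def set_gatoms_separate_guard by auto
    then show ?thesis using w in_univ by simp
  qed
  ultimately show ?thesis
    using assms(1) unfolding sat_guard_def
    by (auto simp: separate_guard_def w_def intro!: exI[of _ w])
qed

lemma aholds_Gstruct:
  assumes "q \<in> plays ar k A" and "v ` avars \<alpha> \<subseteq> last q" and "aholds A v \<alpha>"
  shows "aholds (Gstruct ar k A) (\<lambda>i. cls ar k A (q, v i)) \<alpha>"
proof (cases \<alpha>)
  case (RelA R xs)
  with assms show ?thesis
    by (auto simp: Gstruct_def intro!: exI[of _ q] exI[of _ "map v xs"])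
qed (use assms in simp)

lemma hom_aholds: "hom A B h \<Longrightarrow> aholds A v \<alpha> \<Longrightarrow> aholds B (h \<circ> v) \<alpha>"
  unfolding hom_def by (cases \<alpha>) (auto simp flip: map_map)

lemma hom_cls_in_univ:
  "hom (Gstruct ar k A) B h \<Longrightarrow> (p, a) \<in> fplays ar k A \<Longrightarrow> h (cls ar k A (p, a)) \<in> univ B"
  using cls_in_univ unfolding hom_def by blast

lemma sat_separate_guard_hom:
  assumes hom: "hom (Gstruct ar k A) B h" and Q: "Q \<in> plays ar k A"
    and G: "well_typed_guard ar G" "sat_guard A G as" and "set as \<subseteq> last Q"
  shows "sat_guard B (separate_guard G) (map (\<lambda>a. h (cls ar k A (Q, a))) as)"
proof -
  obtain v where v: "length as = gfree G" "\<forall>i<gfree G. v i = as ! i"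
    "\<forall>i\<in>gvars G. v i \<in> univ A" "\<forall>\<alpha>\<in>set (gatoms G). aholds A v \<alpha>"
    using G(2) unfolding sat_guard_def by blast
  let ?atom = "\<lambda>t. gatoms G ! t"
  define Q_atom where "Q_atom t = Q @ [v ` avars (?atom t)]" for t
  define vs where "vs t i = h (cls ar k A (Q_atom t, v i))" for t i
  have guarded_atom: "guarded ar k A (v ` avars (?atom t))" if "t < length (gatoms G)" for t
    using guarded_atom_image[OF G(1) nth_mem[OF that]] v(3,4) nth_mem[OF that]
    unfolding gvars_def by blast
  have Q_atom: "Q_atom t \<in> plays ar k A" if "t < length (gatoms G)" for t
    using Q guarded_atom[OF that] unfolding Q_atom_def plays_def by auto
  show ?thesis
  proof (rule sat_separate_guard)
    show "length (map (\<lambda>a. h (cls ar k A (Q, a))) as) = gfree G" using v(1) by simp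
  next
    fix t assume t: "t < length (gatoms G)"
    have "aholds (Gstruct ar k A) (\<lambda>i. cls ar k A (Q_atom t, v i)) (?atom t)"
      using Q_atom[OF t] v(4) t by (intro aholds_Gstruct) (auto simp: Q_atom_def)
    then show "aholds B (vs t) (?atom t)"
      using hom_aholds[OF hom] unfolding vs_def comp_def by blast
  next
    fix t i assume t: "t < length (gatoms G)" and i: "i \<in> avars (?atom t)"
    then show "vs t i \<in> univ B"
      using hom_cls_in_univ[OF hom] Q_atom[OF t] unfolding vs_def fplays_def Q_atom_def by auto
    assume "i < gfree G"
    then have "v i = as ! i" and "as ! i \<in> last Q"
      using v(1,2) \<open>set as \<subseteq> last Q\<close> by auto
    moreover have "as ! i \<in> v ` avars (?atom t)" using i \<open>v i = as ! i\<close> by (metis image_eqI)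
    ultimately have "((Q_atom t, as ! i), (Q, as ! i)) \<in> sim ar k A"
      using sim_snoc[OF Q guarded_atom[OF t]] by (simp add: Q_atom_def)
    then show "vs t i = map (\<lambda>a. h (cls ar k A (Q, a))) as ! i"
      using \<open>v i = as ! i\<close> \<open>i < gfree G\<close> v(1) by (simp add: cls_eq vs_def)
  qed
qed

lemma guarded_hom_image:
  assumes hom: "hom (Gstruct ar k A) B h" and P: "P \<in> plays ar k A"
  shows "guarded ar k B ((\<lambda>b. h (cls ar k A (P, b))) ` last P)"
proof -
  have "guarded ar k A (last P)" using P unfolding plays_def by auto
  then obtain G as where G: "is_guard ar k G" "sat_guard A G as" "last P \<subseteq> set as"
    unfolding guarded_def by blast
  define Q where "Q = P @ [set as]"
  have guarded_as: "guarded ar k A (set as)" using G unfolding guarded_def by blast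
  then have "Q \<in> plays ar k A" using P unfolding Q_def plays_def by auto
  then have "sat_guard B (separate_guard G) (map (\<lambda>a. h (cls ar k A (Q, a))) as)"
    using sat_separate_guard_hom[OF hom _ is_guard_well_typed[OF G(1)] G(2)] by (simp add: Q_def)
  moreover have "cls ar k A (P, b) = cls ar k A (Q, b)" if "b \<in> last P" for b
    using sim_snoc[OF P guarded_as that] G(3) that by (auto simp: Q_def cls_eq)
  then have "(\<lambda>b. h (cls ar k A (P, b))) ` last P \<subseteq> set (map (\<lambda>a. h (cls ar k A (Q, a))) as)"
    using G(3) by auto
  ultimately show ?thesis
    using is_guard_separate_guard[OF G(1)] unfolding guarded_def by blast
qed

section \<open>Lifting plays along a homomorphism\<close>

definition lift_play :: "('r \<Rightarrow> nat) \<Rightarrow> guard_kind \<Rightarrow> ('a, 'r) struct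
    \<Rightarrow> (('a set list \<times> 'a) set \<Rightarrow> 'b) \<Rightarrow> 'a set list \<Rightarrow> 'b set list" where
  "lift_play ar k A h p =
     map (\<lambda>j. (\<lambda>b. h (cls ar k A (take (Suc j) p, b))) ` (p ! j)) [0..<length p]"

lemma length_lift_play [simp]: "length (lift_play ar k A h p) = length p"
  by (simp add: lift_play_def)

lemma nth_lift_play:
  "j < length p \<Longrightarrow> lift_play ar k A h p ! j = (\<lambda>b. h (cls ar k A (take (Suc j) p, b))) ` (p ! j)"
  by (simp add: lift_play_def)

lemma take_lift_play: "take i (lift_play ar k A h p) = lift_play ar k A h (take i p)"
proof (rule nth_equalityI)
  fix j assume "j < length (take i (lift_play ar k A h p))"
  then have "j < i" "j < length p" by auto
  then show "take i (lift_play ar k A h p) ! j = lift_play ar k A h (take i p) ! j"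
    by (simp add: nth_lift_play)
qed simp

lemma last_lift_play:
  "p \<noteq> [] \<Longrightarrow> last (lift_play ar k A h p) = (\<lambda>b. h (cls ar k A (p, b))) ` last p"
proof -
  assume "p \<noteq> []"
  then have "lift_play ar k A h p \<noteq> []" by (metis length_lift_play length_0_conv)
  then have "last (lift_play ar k A h p) = lift_play ar k A h p ! (length p - 1)"
    by (simp add: last_conv_nth)
  also have "\<dots> = (\<lambda>b. h (cls ar k A (p, b))) ` last p"
    using \<open>p \<noteq> []\<close> by (simp add: nth_lift_play last_conv_nth)
  finally show ?thesis .
qed

lemma prefix_lift_playE:
  assumes "prefix u (lift_play ar k A h p)"
  obtains i where "u = lift_play ar k A h (take i p)"
  using assms by (metis prefixE append_eq_conv_conj take_lift_play)

lemma plays_take: "p \<in> plays ar k A \<Longrightarrow> 0 < i \<Longrightarrow> take i p \<in> plays ar k A"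
  unfolding plays_def by (auto dest: in_set_takeD)

lemma lift_play_plays:
  assumes hom: "hom (Gstruct ar k A) B h" and p: "p \<in> plays ar k A"
  shows "lift_play ar k A h p \<in> plays ar k B"
proof -
  have "guarded ar k B (lift_play ar k A h p ! j)" if "j < length p" for j
  proof -
    have "last (take (Suc j) p) = p ! j" using that by (simp add: take_Suc_conv_app_nth)
    then show ?thesis
      using guarded_hom_image[OF hom plays_take[OF p, of "Suc j"]] that
      by (simp add: nth_lift_play)
  qed
  then have "\<forall>U\<in>set (lift_play ar k A h p). guarded ar k B U"
    by (auto simp: in_set_conv_nth)
  moreover have "p \<noteq> []" using p unfolding plays_def by simp
  then have "lift_play ar k A h p \<noteq> []" by (metis length_lift_play length_0_conv)
  ultimately show ?thesis
    unfolding plays_def by simp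
qed

lemma fplays_lift_play:
  assumes "hom (Gstruct ar k A) B h" and "(p, a) \<in> fplays ar k A"
  shows "(lift_play ar k A h p, h (cls ar k A (p, a))) \<in> fplays ar k B"
proof -
  have "p \<in> plays ar k A" "p \<noteq> []" "a \<in> last p"
    using assms(2) unfolding fplays_def plays_def by auto
  then show ?thesis
    using lift_play_plays[OF assms(1)] unfolding fplays_def by (simp add: last_lift_play)
qed

lemma prefix_lift_play: "prefix m q \<Longrightarrow> prefix (lift_play ar k A h m) (lift_play ar k A h q)"
  by (metis prefixE append_eq_conv_conj take_is_prefix take_lift_play)

lemma persists_lift_play:
  assumes "(q, c) \<in> fplays ar k A" and "m \<noteq> []" and "prefix m q" and "persists c m q"
  shows "persists (h (cls ar k A (q, c))) (lift_play ar k A h m) (lift_play ar k A h q)"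
  unfolding persists_def
proof (intro allI impI)
  fix u assume u: "prefix (lift_play ar k A h m) u" "prefix u (lift_play ar k A h q)"
  obtain i where u_eq: "u = lift_play ar k A h (take i q)"
    using u(2) by (rule prefix_lift_playE)
  have "length m \<le> length (take i q)" using prefix_length_le[OF u(1)] u_eq by simp
  then have m: "prefix m (take i q)"
    using assms(3) take_is_prefix prefix_length_prefix by blast
  then have "((take i q, c), (q, c)) \<in> sim ar k A"
    using sim_prefix[OF assms(1,2,4)] take_is_prefix by blast
  then have "cls ar k A (q, c) = cls ar k A (take i q, c)" by (simp add: cls_eq)
  moreover have "take i q \<noteq> []" using m assms(2) by (metis prefix_Nil)
  moreover have "c \<in> last (take i q)"
    using m assms(4) take_is_prefix unfolding persists_def by blast
  ultimately show "h (cls ar k A (q, c)) \<in> last u"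
    using u_eq by (simp add: last_lift_play)
qed

lemma sim_lift_play:
  assumes hom: "hom (Gstruct ar k A) B h" and sim: "((q, c), (q', c)) \<in> sim ar k A"
  shows "((lift_play ar k A h q, h (cls ar k A (q, c))),
          (lift_play ar k A h q', h (cls ar k A (q', c)))) \<in> sim ar k B"
proof -
  obtain m where fp: "(q, c) \<in> fplays ar k A" "(q', c) \<in> fplays ar k A"
    and m: "m \<noteq> []" "prefix m q" "prefix m q'" "persists c m q" "persists c m q'"
    using sim unfolding sim_iff by blast
  have "cls ar k A (q', c) = cls ar k A (q, c)" using cls_eq[OF sim] by simp
  moreover have "lift_play ar k A h m \<noteq> []" using m(1) by (metis length_lift_play length_0_conv)
  ultimately show ?thesis
    using fplays_lift_play[OF hom] fp m prefix_lift_play persists_lift_play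
    unfolding sim_iff by metis
qed

lemma coext_cls:
  assumes hom: "hom (Gstruct ar k A) B h" and fp: "(p, a) \<in> fplays ar k A"
  shows "coext ar k A B h (cls ar k A (p, a)) = cls ar k B (lift_play ar k A h p, h (cls ar k A (p, a)))"
proof -
  obtain p' a' where some: "(SOME y. y \<in> cls ar k A (p, a)) = (p', a')" by fastforce
  have "((p', a'), (p, a)) \<in> sim ar k A" using some_in_cls[OF fp] some by simp
  then have sim: "((p', a), (p, a)) \<in> sim ar k A" and "a' = a"
    unfolding sim_iff by auto
  have "coext ar k A B h (cls ar k A (p, a)) =
    cls ar k B (lift_play ar k A h p', h (cls ar k A (p', a)))"
    unfolding coext_def lift_play_def some \<open>a' = a\<close> by simp
  also have "\<dots> = cls ar k B (lift_play ar k A h p, h (cls ar k A (p, a)))"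
    using cls_eq[OF sim_lift_play[OF hom sim]] by simp
  finally show ?thesis .
qed

section \<open>The comonad laws\<close>

lemma hom_comp: "hom X Y f \<Longrightarrow> hom Y Z g \<Longrightarrow> hom X Z (g \<circ> f)"
  unfolding hom_def by (simp flip: map_map)

lemma hom_counit: "hom (Gstruct ar k A) A counit"
  unfolding hom_def
proof (intro conjI ballI allI)
  fix x assume "x \<in> univ (Gstruct ar k A)"
  then obtain p a where fp: "(p, a) \<in> fplays ar k A" and x: "x = cls ar k A (p, a)"
    by (rule univ_GstructE)
  then have "guarded ar k A (last p)" "a \<in> last p"
    unfolding fplays_def plays_def by auto
  then have "a \<in> univ A" using guarded_subset_univ by blast
  then show "counit x \<in> univ A"
    using x counit_cls[OF fp] by simp
next
  fix R t assume "t \<in> rel (Gstruct ar k A) R"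
  then obtain p as where t: "t = map (\<lambda>a. cls ar k A (p, a)) as" "p \<in> plays ar k A"
    "as \<in> rel A R" "set as \<subseteq> last p"
    unfolding Gstruct_def by auto
  then have "map counit t = as"
    by (auto simp: counit_cls fplays_def intro!: map_idI)
  then show "map counit t \<in> rel A R" using t(3) by simp
qed

lemma hom_coext:
  assumes hom: "hom (Gstruct ar k A) B f"
  shows "hom (Gstruct ar k A) (Gstruct ar k B) (coext ar k A B f)"
  unfolding hom_def
proof (intro conjI ballI allI)
  fix x assume "x \<in> univ (Gstruct ar k A)"
  then obtain p a where fp: "(p, a) \<in> fplays ar k A" and x: "x = cls ar k A (p, a)"
    by (rule univ_GstructE)
  then show "coext ar k A B f x \<in> univ (Gstruct ar k B)"
    using coext_cls[OF hom fp] cls_in_univ[OF fplays_lift_play[OF hom fp]] by simp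
next
  fix R t assume t_rel: "t \<in> rel (Gstruct ar k A) R"
  then obtain p as where t: "t = map (\<lambda>a. cls ar k A (p, a)) as" "p \<in> plays ar k A"
    "as \<in> rel A R" "set as \<subseteq> last p"
    unfolding Gstruct_def by auto
  let ?bs = "map (\<lambda>a. f (cls ar k A (p, a))) as"
  have "map f t \<in> rel B R" using hom t_rel unfolding hom_def by blast
  then have "?bs \<in> rel B R" using t(1) by (simp add: comp_def)
  moreover have "set ?bs \<subseteq> last (lift_play ar k A f p)"
    using t(2,4) unfolding plays_def by (auto simp: last_lift_play)
  moreover have "map (coext ar k A B f) t = map (\<lambda>b. cls ar k B (lift_play ar k A f p, b)) ?bs"
    using t(1,2,4) by (auto simp: coext_cls[OF hom] fplays_def)
  ultimately show "map (coext ar k A B f) t \<in> rel (Gstruct ar k B) R"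
    using lift_play_plays[OF hom t(2)] unfolding Gstruct_def struct.simps by blast
qed

lemma lift_play_counit:
  assumes "p \<in> plays ar k A"
  shows "lift_play ar k A counit p = p"
proof (rule nth_equalityI)
  fix j assume "j < length (lift_play ar k A counit p)"
  then have j: "j < length p" by simp
  then have "take (Suc j) p \<in> plays ar k A" "last (take (Suc j) p) = p ! j"
    using plays_take[OF assms, of "Suc j"] by (simp_all add: take_Suc_conv_app_nth)
  then show "lift_play ar k A counit p ! j = p ! j"
    using j by (auto simp: nth_lift_play counit_cls fplays_def)
qed simp

lemma lift_play_coext:
  assumes hom: "hom (Gstruct ar k A) B f" and p: "p \<in> plays ar k A"
  shows "lift_play ar k A (g \<circ> coext ar k A B f) p = lift_play ar k B g (lift_play ar k A f p)"
proof (rule nth_equalityI)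
  fix j assume "j < length (lift_play ar k A (g \<circ> coext ar k A B f) p)"
  then have j: "j < length p" by simp
  then have "take (Suc j) p \<in> plays ar k A" "last (take (Suc j) p) = p ! j"
    using plays_take[OF p, of "Suc j"] by (simp_all add: take_Suc_conv_app_nth)
  then have "(take (Suc j) p, b) \<in> fplays ar k A" if "b \<in> p ! j" for b
    using that unfolding fplays_def by simp
  then show "lift_play ar k A (g \<circ> coext ar k A B f) p ! j =
      lift_play ar k B g (lift_play ar k A f p) ! j"
    using j by (auto simp: nth_lift_play coext_cls[OF hom] take_lift_play image_image)
qed simp

theorem theorem3p5:
  fixes ar :: "'r \<Rightarrow> nat" and k :: guard_kind
    and A :: "('a, 'r) struct" and B :: "('b, 'r) struct" and C :: "('c, 'r) struct"
    and f :: "('a set list \<times> 'a) set \<Rightarrow> 'b"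
    and g :: "('b set list \<times> 'b) set \<Rightarrow> 'c"
  assumes "sigma_struct ar A" and "sigma_struct ar B" and "sigma_struct ar C"
    and "hom (Gstruct ar k A) B f"
    and "hom (Gstruct ar k B) C g"
  shows "(\<forall>x\<in>univ (Gstruct ar k A). coext ar k A A counit x = x)
       \<and> (\<forall>x\<in>univ (Gstruct ar k A). counit (coext ar k A B f x) = f x)
       \<and> (\<forall>x\<in>univ (Gstruct ar k A).
            coext ar k A C (g \<circ> coext ar k A B f) x = coext ar k B C g (coext ar k A B f x))"
proof (intro conjI ballI)
  note f = \<open>hom (Gstruct ar k A) B f\<close> and g = \<open>hom (Gstruct ar k B) C g\<close>
  fix x assume "x \<in> univ (Gstruct ar k A)"
  then obtain p a where fp: "(p, a) \<in> fplays ar k A" and x: "x = cls ar k A (p, a)"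
    by (rule univ_GstructE)
  have p: "p \<in> plays ar k A" using fp unfolding fplays_def by simp
  have fx: "coext ar k A B f x = cls ar k B (lift_play ar k A f p, f x)"
    using coext_cls[OF f fp] x by simp
  show "coext ar k A A counit x = x"
    using coext_cls[OF hom_counit fp] counit_cls[OF fp] lift_play_counit[OF p] x by simp
  show "counit (coext ar k A B f x) = f x"
    using counit_cls[OF fplays_lift_play[OF f fp]] fx x by simp
  show "coext ar k A C (g \<circ> coext ar k A B f) x = coext ar k B C g (coext ar k A B f x)"
    using coext_cls[OF hom_comp[OF hom_coext[OF f] g] fp]
      coext_cls[OF g fplays_lift_play[OF f fp]] lift_play_coext[OF f p, of g] fx x
    by simp
qed

end
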